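(* Let $q$ be a prime power. Then: (i) $\ell_q(u,n)=u+q$ for all integers $n\ge1$ and $1\le u\le\min\{n,q\}$; (ii) $\ell_q(sq)=sq+q$ for $1\le s\le q$; (iii) $\ell_q(q+1,n)=2(q+1)$ for all $n\ge2$; (iv) if $q$ is even, $\ell_q(q+2,n)=2(q+1)$ for all $n\ge 2$; (v) $\ell_q(q^2-2q+1)=q^2-1$; (vi) $\ell_q(u)=q^2$ for $q^2-2q+2\le u\le q^2-q$; (vii) $\ell_q(u)=q^2+q$ for $q^2-q+1\le u\le q^2$.
   Context: In the affine plane $\mathrm{AG}(2,q)$, a transversal is a set $\mathcal{T}=\{L_1,\dots,L_{q+1}\}$ of $q+1$ pairwise non-parallel lines (one from each parallel class). For a set $\mathcal{F}$ of points of $\mathrm{AG}(2,q)$ put $\mathcal{F}(\mathcal{T})=\sum_{i=1}^{q+1}|\mathcal{F}\cap L_i|$. A projective $(u,n)$-arc in $\mathrm{AG}(2,q)$ is a set of $u$ points meeting every line in at most $n$ points. For integers $u,n\ge0$ such that a projective $(u,n)$-arc in $\mathrm{AG}(2,q)$ exists, $\ell_q(u,n)$ is the minimum, over all projective $(u,n)$-arcs $\mathcal{F}$ in $\mathrm{AG}(2,q)$, of $\max\{\mathcal{F}(\mathcal{T}):\mathcal{T}\text{ a transversal of }\mathrm{AG}(2,q)\}$. For $0\le u\le q^2$, $\ell_q(u)=\ell_q(u,q)$ (the same minimum over all sets of $u$ points). In parts (i),(iii),(iv) the value $u$ is assumed to be such that a projective $(u,n)$-arc in $\mathrm{AG}(2,q)$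 exists. *)

theory Defs
  imports Main
begin

definition ag_line :: "('a::{field,finite} \<times> 'a) set \<Rightarrow> bool" where
  "ag_line L \<longleftrightarrow> (\<exists>a b c. (a, b) \<noteq> (0, 0) \<and> L = {(x, y). a * x + b * y = c})"

definition ag_parallel :: "('a::{field,finite} \<times> 'a) set \<Rightarrow> ('a \<times> 'a) set \<Rightarrow> bool" where
  "ag_parallel L M \<longleftrightarrow> L = M \<or> L \<inter> M = {}"

definition transversal :: "('a::{field,finite} \<times> 'a) set set \<Rightarrow> bool" where
  "transversal T \<longleftrightarrow> (\<forall>L\<in>T. ag_line L) \<and> card T = card (UNIV :: 'a set) + 1 \<and>
     (\<forall>L\<in>T. \<forall>M\<in>T. L \<noteq> M \<longrightarrow> \<not> ag_parallel L M)"

definition Fval :: "('a::{field,finite} \<times> 'a) set \<Rightarrow> ('a \<times> 'a) set set \<Rightarrow> nat" where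
  "Fval F T = (\<Sum>L\<in>T. card (F \<inter> L))"

definition proj_arc :: "nat \<Rightarrow> nat \<Rightarrow> ('a::{field,finite} \<times> 'a) set \<Rightarrow> bool" where
  "proj_arc u n F \<longleftrightarrow> card F = u \<and> (\<forall>L. ag_line L \<longrightarrow> card (F \<inter> L) \<le> n)"

definition ell :: "'a::{field,finite} itself \<Rightarrow> nat \<Rightarrow> nat \<Rightarrow> nat" where
  "ell _ u n = Min {Max {Fval F T | T. transversal (T :: ('a \<times> 'a) set set)}
                   | F :: ('a \<times> 'a) set. proj_arc u n F}"

definition ell1 :: "('a::{field,finite}) itself \<Rightarrow> nat \<Rightarrow> nat" where
  "ell1 t u = ell t u (card (UNIV :: 'a set))"

end

theory Submission
  imports Defs "HOL-Computational_Algebra.Polynomial" "HOL-Library.Cardinality"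
begin

text \<open>A transversal picks one line from each of the q + 1 parallel classes, so F(T) is a sum
over directions. Lower bounds for the maximum come from choosing, in every class, a line rich in F
(pigeonhole, as each class partitions the plane), or the q + 1 lines through a point of F, which
cover F once and the point q more times. Matching upper bounds come from explicit sets: points of
one vertical line, s vertical lines, a conic, a conic with its nucleus when q is even, the
complement of the two axes, and subsets of the complement of one axis. In range (vi) a set F
containing no line has a complement meeting every line, i.e. a blocking set; it has fewer than
2q - 1 points, contradicting Jamison's bound, proved here by the polynomial method.\<close>

section \<open>Lines and transversals\<close>

text \<open>Direction None stands for the vertical lines x = b, direction Some m for the lines
y = m x + b; line_coord d p is the b of the line of direction d through p.\<close>

definition line_coord :: "'a::field option \<Rightarrow> 'a \<times> 'a \<Rightarrow> 'a" where
  "line_coord d p = (case d of None \<Rightarrow> fst p | Some m \<Rightarrow> snd p - m * fst p)"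

definition affine_line :: "'a::field option \<Rightarrow> 'a \<Rightarrow> ('a \<times> 'a) set" where
  "affine_line d b = {p. line_coord d p = b}"

lemma card_UNIV_field_ge_2: "2 \<le> CARD('a::{field,finite})"
proof -
  have "card {0::'a, 1} \<le> CARD('a)" by (rule card_mono) auto
  thus ?thesis by simp
qed

lemma card_UNIV_fieldE:
  obtains r where "CARD('a::{field,finite}) = r + 2"
  using card_UNIV_field_ge_2[where 'a='a] by (intro that[of "CARD('a) - 2"]) simp

lemma ag_line_iff: "ag_line L \<longleftrightarrow> (\<exists>d b. L = affine_line d b)"
proof
  assume "ag_line L"
  then obtain a b e where ab: "(a, b) \<noteq> (0, 0)" and L: "L = {(x, y). a * x + b * y = e}"
    unfolding ag_line_def by blast
  show "\<exists>d b. L = affine_line d b"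
  proof (cases "b = 0")
    case True
    with ab have "a \<noteq> 0" by simp
    with True have "L = affine_line None (e / a)"
      unfolding L affine_line_def line_coord_def by (auto simp: field_simps)
    thus ?thesis by blast
  next
    case False
    hence "L = affine_line (Some (- a / b)) (e / b)"
      unfolding L affine_line_def line_coord_def by (auto simp: field_simps)
    thus ?thesis by blast
  qed
next
  assume "\<exists>d b. L = affine_line d b"
  then obtain d b where L: "L = affine_line d b" by blast
  show "ag_line L"
    unfolding ag_line_def
  proof (cases d)
    case None
    show "\<exists>a b' c. (a, b') \<noteq> (0, 0) \<and> L = {(x, y). a * x + b' * y = c}"
      by (intro exI[of _ 1] exI[of _ 0] exI[of _ b]) (auto simp: L None affine_line_def line_coord_def)
  next
    case (Some m)
    show "\<exists>a b' c. (a, b') \<noteq> (0, 0) \<and> L = {(x, y). a * x + b' * y = c}"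
      by (intro exI[of _ "- m"] exI[of _ 1] exI[of _ b])
        (auto simp: L Some affine_line_def line_coord_def algebra_simps)
  qed
qed

lemma affine_lines_parallel:
  "b \<noteq> b' \<Longrightarrow> affine_line d b \<inter> affine_line d b' = {}"
  by (auto simp: affine_line_def)

lemma affine_lines_meet:
  fixes b b' :: "'a::field"
  assumes "d \<noteq> d'"
  shows "affine_line d b \<inter> affine_line d' b' \<noteq> {}"
proof (cases d)
  case None
  then obtain m' where d': "d' = Some m'" using assms by (cases d') auto
  have "(b, m' * b + b') \<in> affine_line d b \<inter> affine_line d' b'"
    by (simp add: None d' affine_line_def line_coord_def)
  thus ?thesis by blast
next
  case (Some m)
  show ?thesis
  proof (cases d')
    case None
    have "(b', m * b' + b) \<in> affine_line d b \<inter> affine_line d' b'"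
      by (simp add: None Some affine_line_def line_coord_def)
    thus ?thesis by blast
  next
    case (Some m')
    with \<open>d = Some m\<close> assms have "m - m' \<noteq> 0" by auto
    define x where "x = (b' - b) / (m - m')"
    have "(x, m * x + b) \<in> affine_line d b \<inter> affine_line d' b'"
      using \<open>m - m' \<noteq> 0\<close>
      by (simp add: \<open>d = Some m\<close> Some affine_line_def line_coord_def x_def field_simps)
    thus ?thesis by blast
  qed
qed

lemma affine_line_inj:
  fixes b b' :: "'a::field"
  assumes eq: "affine_line d b = affine_line d' b'"
  shows "d = d' \<and> b = b'"
proof -
  have "d = d'"
  proof (rule ccontr)
    assume "d \<noteq> d'"
    hence "affine_line d b \<inter> affine_line d' (b' + 1) \<noteq> {}" by (rule affine_lines_meet)
    thus False using affine_lines_parallel[of b' "b' + 1" d'] by (simp add: eq)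
  qed
  moreover have "affine_line d b \<noteq> {}"
    using affine_lines_meet[of d "if d = None then Some 0 else None" b 0] by (cases d) auto
  ultimately show ?thesis using eq affine_lines_parallel[of b b' d] by auto
qed

lemma card_affine_line: "card (affine_line d (b::'a::{field,finite})) = CARD('a)"
proof (cases d)
  case None
  have "affine_line d b = (\<lambda>y. (b, y)) ` UNIV" by (auto simp: None affine_line_def line_coord_def)
  thus ?thesis by (simp add: card_image inj_on_def)
next
  case (Some m)
  have "affine_line d b = (\<lambda>x. (x, m * x + b)) ` UNIV"
    by (auto simp: Some affine_line_def line_coord_def algebra_simps)
  thus ?thesis by (simp add: card_image inj_on_def)
qed

lemma card_Int_affine_line_le: "card (F \<inter> affine_line d (b::'a::{field,finite})) \<le> CARD('a)"
  by (metis card_affine_line card_mono finite inf_le2)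

lemma card_Int_affine_line_le_diff_1:
  fixes F :: "('a::{field,finite} \<times> 'a) set"
  assumes "p \<in> affine_line d b" "p \<notin> F"
  shows "card (F \<inter> affine_line d b) \<le> CARD('a) - 1"
proof -
  have "card (F \<inter> affine_line d b) \<le> card (affine_line d b - {p})"
    using assms by (intro card_mono) auto
  thus ?thesis using assms card_affine_line[of d b] by (simp add: card_Diff_singleton)
qed

lemma sum_card_Int_affine_line:
  fixes A :: "('a::{field,finite} \<times> 'a) set"
  shows "(\<Sum>b\<in>UNIV. card (A \<inter> affine_line d b)) = card A"
proof -
  have "(\<Sum>b\<in>UNIV. \<Sum>p\<in>{p\<in>A. line_coord d p = b}. 1::nat) = (\<Sum>p\<in>A. 1)"
    by (rule sum.group) auto
  moreover have "{p\<in>A. line_coord d p = b} = A \<inter> affine_line d b" for b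
    by (auto simp: affine_line_def)
  ultimately show ?thesis by simp
qed

lemma exists_affine_line_card_gt:
  fixes A :: "('a::{field,finite} \<times> 'a) set"
  assumes "CARD('a) * k < card A"
  shows "\<exists>b. k < card (A \<inter> affine_line d b)"
proof (rule ccontr)
  assume "\<nexists>b. k < card (A \<inter> affine_line d b)"
  hence "(\<Sum>b\<in>UNIV. card (A \<inter> affine_line d b)) \<le> (\<Sum>b\<in>(UNIV::'a set). k)"
    by (intro sum_mono) (simp add: not_less)
  thus False using assms by (simp add: sum_card_Int_affine_line)
qed

lemma exists_common_affine_line:
  fixes p p' :: "'a::field \<times> 'a"
  shows "\<exists>d. line_coord d p' = line_coord d p"
proof (cases "fst p' = fst p")
  case True
  thus ?thesis by (intro exI[of _ None]) (simp add: line_coord_def)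
next
  case False
  hence "line_coord (Some ((snd p' - snd p) / (fst p' - fst p))) p'
       = line_coord (Some ((snd p' - snd p) / (fst p' - fst p))) p"
    by (simp add: line_coord_def field_simps)
  thus ?thesis by blast
qed

lemma sum_card_Int_affine_lines_through:
  fixes F :: "('a::{field,finite} \<times> 'a) set"
  assumes "p \<in> F"
  shows "card F + CARD('a) \<le> (\<Sum>d\<in>UNIV. card (F \<inter> affine_line d (line_coord d p)))"
proof -
  let ?L = "\<lambda>d. affine_line d (line_coord d p)"
  have cover: "F - {p} \<subseteq> (\<Union>d. (F - {p}) \<inter> ?L d)"
  proof
    fix f assume f: "f \<in> F - {p}"
    obtain d where "line_coord d f = line_coord d p"
      using exists_common_affine_line[of f p] by blast
    with f show "f \<in> (\<Union>d. (F - {p}) \<inter> ?L d)" by (auto simp: affine_line_def)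
  qed
  have split: "card (F \<inter> ?L d) = 1 + card ((F - {p}) \<inter> ?L d)" for d
  proof -
    have "F \<inter> ?L d = insert p ((F - {p}) \<inter> ?L d)" using assms by (auto simp: affine_line_def)
    thus ?thesis by simp
  qed
  have "card (F - {p}) \<le> card (\<Union>d. (F - {p}) \<inter> ?L d)"
    using cover by (rule card_mono[OF finite])
  also have "\<dots> \<le> (\<Sum>d\<in>UNIV. card ((F - {p}) \<inter> ?L d))"
    by (rule card_UN_le) simp
  finally have "card (F - {p}) \<le> (\<Sum>d\<in>UNIV. card ((F - {p}) \<inter> ?L d))" .
  moreover have "(\<Sum>d\<in>UNIV. card (F \<inter> ?L d))
      = CARD('a option) + (\<Sum>d\<in>UNIV. card ((F - {p}) \<inter> ?L d))"
    by (simp only: split sum.distrib) simp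
  moreover have "card F = 1 + card (F - {p})"
    using card_Suc_Diff1[OF finite assms] by simp
  ultimately show ?thesis by (simp add: card_UNIV_option)
qed

lemma sum_UNIV_option_if_eq:
  "(\<Sum>d\<in>(UNIV::'a::finite option set). if d = d0 then x else y) = x + CARD('a) * y"
proof -
  have "card (UNIV - {d0}) = CARD('a)" by (simp add: card_Diff_singleton card_UNIV_option)
  thus ?thesis by (simp add: sum.remove[of UNIV d0])
qed

lemma transversal_range:
  fixes g :: "'a::{field,finite} option \<Rightarrow> 'a"
  shows "transversal (range (\<lambda>d. affine_line d (g d)))"
  unfolding transversal_def
proof (intro conjI ballI impI)
  fix L assume "L \<in> range (\<lambda>d. affine_line d (g d))"
  thus "ag_line L" using ag_line_iff by auto
next
  have "inj (\<lambda>d. affine_line d (g d))"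
    by (rule injI) (use affine_line_inj in blast)
  thus "card (range (\<lambda>d. affine_line d (g d))) = CARD('a) + 1"
    by (simp add: card_image card_UNIV_option)
next
  fix L M assume "L \<in> range (\<lambda>d. affine_line d (g d))" "M \<in> range (\<lambda>d. affine_line d (g d))"
    and "L \<noteq> M"
  then obtain d d' where "L = affine_line d (g d)" "M = affine_line d' (g d')" "d \<noteq> d'" by auto
  thus "\<not> ag_parallel L M" using \<open>L \<noteq> M\<close> affine_lines_meet unfolding ag_parallel_def by metis
qed

lemma Fval_range:
  fixes g :: "'a::{field,finite} option \<Rightarrow> 'a"
  shows "Fval F (range (\<lambda>d. affine_line d (g d))) = (\<Sum>d\<in>UNIV. card (F \<inter> affine_line d (g d)))"
proof -
  have "inj (\<lambda>d. affine_line d (g d))"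
    by (rule injI) (use affine_line_inj in blast)
  thus ?thesis unfolding Fval_def by (simp add: sum.reindex)
qed

lemma transversalE:
  fixes T :: "('a::{field,finite} \<times> 'a) set set"
  assumes T: "transversal T"
  obtains g where "T = range (\<lambda>d. affine_line d (g d))"
proof -
  have "\<forall>L\<in>T. \<exists>d b. L = affine_line d b"
    using T by (simp add: transversal_def ag_line_iff)
  then obtain dir off where L: "\<And>L. L \<in> T \<Longrightarrow> L = affine_line (dir L) (off L)"
    by metis
  have "inj_on dir T"
  proof (rule inj_onI, rule ccontr)
    fix L M assume LM: "L \<in> T" "M \<in> T" "dir L = dir M" "L \<noteq> M"
    have L': "L = affine_line (dir L) (off L)" and M': "M = affine_line (dir L) (off M)"
      using L[OF LM(1)] L[OF LM(2)] LM(3) by simp_all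
    hence "off L \<noteq> off M" using LM(4) by metis
    hence "L \<inter> M = {}" using L' M' affine_lines_parallel by metis
    thus False using T LM unfolding transversal_def ag_parallel_def by blast
  qed
  hence "card (dir ` T) = CARD('a option)"
    using T by (simp add: card_image transversal_def card_UNIV_option)
  hence "dir ` T = UNIV" by (simp add: card_eq_UNIV_imp_eq_UNIV)
  hence "\<forall>d. \<exists>L\<in>T. dir L = d" by (metis imageE UNIV_I)
  then obtain sel where sel: "\<And>d. sel d \<in> T" "\<And>d. dir (sel d) = d" by metis
  have "T = range sel"
  proof
    show "T \<subseteq> range sel"
    proof
      fix L assume "L \<in> T"
      hence "L = sel (dir L)" by (intro inj_onD[OF \<open>inj_on dir T\<close>]) (simp_all add: sel)
      thus "L \<in> range sel" by blast
    qed
  qed (use sel in auto)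
  also have "\<dots> = range (\<lambda>d. affine_line d (off (sel d)))"
  proof (rule image_cong)
    show "sel d = affine_line d (off (sel d))" for d
      using L[OF sel(1), of d] unfolding sel(2) .
  qed simp
  finally show thesis by (rule that)
qed

lemma Fval_le_sum:
  fixes F :: "('a::{field,finite} \<times> 'a) set"
  assumes "transversal T" and "\<And>d b. card (F \<inter> affine_line d b) \<le> w d"
  shows "Fval F T \<le> (\<Sum>d\<in>UNIV. w d)"
proof -
  obtain g where "T = range (\<lambda>d. affine_line d (g d))" using assms(1) by (rule transversalE)
  thus ?thesis by (simp add: Fval_range sum_mono assms(2))
qed

lemma exists_transversal_Fval_ge_sum:
  fixes F :: "('a::{field,finite} \<times> 'a) set"
  assumes "\<And>d. \<exists>b. w d \<le> card (F \<inter> affine_line d b)"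
  shows "\<exists>T. transversal T \<and> (\<Sum>d\<in>UNIV. w d) \<le> Fval F T"
proof -
  obtain g where "\<And>d. w d \<le> card (F \<inter> affine_line d (g d))" using assms by metis
  thus ?thesis
    by (intro exI[of _ "range (\<lambda>d. affine_line d (g d))"])
      (simp add: transversal_range Fval_range sum_mono)
qed

lemma exists_transversal_Fval_ge_card:
  fixes F :: "('a::{field,finite} \<times> 'a) set"
  assumes "F \<noteq> {}"
  shows "\<exists>T. transversal T \<and> card F + CARD('a) \<le> Fval F T"
proof -
  obtain p where "p \<in> F" using assms by blast
  thus ?thesis
    by (intro exI[of _ "range (\<lambda>d. affine_line d (line_coord d p))"])
      (simp add: transversal_range Fval_range sum_card_Int_affine_lines_through)
qed

lemma exists_transversal_Fval_ge_rich:
  fixes F :: "('a::{field,finite} \<times> 'a) set"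
  assumes "CARD('a) * k < card F"
  shows "\<exists>T. transversal T \<and> (CARD('a) + 1) * Suc k \<le> Fval F T"
proof -
  have "\<exists>b. Suc k \<le> card (F \<inter> affine_line d b)" for d
    using exists_affine_line_card_gt[OF assms] by (simp add: Suc_le_eq)
  from exists_transversal_Fval_ge_sum[of "\<lambda>_. Suc k", OF this]
  show ?thesis by (simp add: card_UNIV_option)
qed

lemma ell_eqI:
  fixes t :: "'a::{field,finite} itself"
  assumes lower: "\<And>F::('a \<times> 'a) set. proj_arc u n F \<Longrightarrow> \<exists>T. transversal T \<and> v \<le> Fval F T"
    and arc: "proj_arc u n (F0 :: ('a \<times> 'a) set)"
    and upper: "\<And>T. transversal T \<Longrightarrow> Fval F0 T \<le> v"
  shows "ell t u n = v"
proof -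
  define M where "M F = Max {Fval F T | T. transversal (T :: ('a \<times> 'a) set set)}"
    for F :: "('a \<times> 'a) set"
  have fin: "finite {Fval F T | T. transversal (T :: ('a \<times> 'a) set set)}" for F :: "('a \<times> 'a) set"
    by (intro finite_image_set) (rule finite)
  have ge: "v \<le> M F" if F: "proj_arc u n F" for F
  proof -
    obtain T where T: "transversal T" "v \<le> Fval F T" using lower[OF F] by blast
    have "Fval F T \<le> M F" unfolding M_def by (rule Max_ge[OF fin]) (use T in blast)
    with T show ?thesis by linarith
  qed
  have "M F0 \<le> v"
  proof -
    obtain T where "transversal T" "v \<le> Fval F0 T" using lower[OF arc] by blast
    hence "{Fval F0 T | T. transversal (T :: ('a \<times> 'a) set set)} \<noteq> {}" by blast
    thus ?thesis unfolding M_def using upper by (subst Max_le_iff[OF fin]) auto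
  qed
  with ge[OF arc] have "M F0 = v" by simp
  have "ell t u n = Min {M F | F. proj_arc u n F}" unfolding ell_def M_def ..
  also have "\<dots> = v"
  proof (rule Min_eqI)
    show "finite {M F | F. proj_arc u n F}" by (intro finite_image_set) (rule finite)
    show "v \<le> y" if "y \<in> {M F | F. proj_arc u n F}" for y using that ge by blast
    show "v \<in> {M F | F. proj_arc u n F}" using arc \<open>M F0 = v\<close> by blast
  qed
  finally show ?thesis .
qed

lemma proj_arc_card_UNIV:
  fixes F :: "('a::{field,finite} \<times> 'a) set"
  assumes "card F = u"
  shows "proj_arc u CARD('a) F"
  unfolding proj_arc_def
proof (intro conjI allI impI)
  show "card F = u" by (rule assms)
  fix L :: "('a \<times> 'a) set" assume "ag_line L"
  then obtain d b where "L = affine_line d b" by (auto simp: ag_line_iff)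
  thus "card (F \<inter> L) \<le> CARD('a)" by (simp add: card_Int_affine_line_le)
qed

section \<open>Jamison's bound for blocking sets\<close>

lemma of_nat_CARD_eq_0: "of_nat CARD('a) = (0::'a::{field,finite})"
proof -
  have "bij_betw (\<lambda>x::'a. x + 1) UNIV UNIV"
    by (rule bij_betw_byWitness[of _ "\<lambda>x. x - 1"]) auto
  hence "(\<Sum>x\<in>UNIV. (x::'a) + 1) = (\<Sum>x\<in>UNIV. x)"
    using sum.reindex_bij_betw[of _ UNIV UNIV "\<lambda>x. x"] by blast
  thus ?thesis by (simp add: sum.distrib)
qed

lemma sum_UNIV_power_eq_0:
  assumes "i < CARD('a) - 1"
  shows "(\<Sum>x\<in>UNIV. x ^ i) = (0::'a::{field,finite})"
proof (cases "i = 0")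
  case True
  thus ?thesis using of_nat_CARD_eq_0 by simp
next
  case False
  have roots: "card {x::'a. x ^ i = 1} \<le> i"
  proof -
    have "coeff (monom (1::'a) i - 1) i = 1" using False by (simp add: coeff_monom)
    hence "monom (1::'a) i - 1 \<noteq> 0" by (metis coeff_0 zero_neq_one)
    moreover have "degree (monom (1::'a) i - 1) \<le> i"
      by (metis degree_diff_le degree_monom_le degree_1 le0)
    ultimately show ?thesis
      using card_poly_roots_bound[of "monom (1::'a) i - 1"] by (simp add: poly_monom)
  qed
  have "\<not> UNIV - {0::'a} \<subseteq> {x. x ^ i = 1}"
  proof
    assume "UNIV - {0::'a} \<subseteq> {x. x ^ i = 1}"
    hence "card (UNIV - {0::'a}) \<le> card {x::'a. x ^ i = 1}" by (intro card_mono) auto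
    thus False using roots assms by (simp add: card_Diff_singleton)
  qed
  then obtain a :: 'a where a: "a \<noteq> 0" "a ^ i \<noteq> 1" by blast
  \<comment> \<open>multiplication by a permutes the field, so the power sum is fixed by the factor a ^ i\<close>
  have "bij_betw (\<lambda>x::'a. a * x) UNIV UNIV"
    by (rule bij_betw_byWitness[of _ "\<lambda>x. x / a"]) (use a in auto)
  hence "(\<Sum>x\<in>UNIV. (a * x) ^ i) = (\<Sum>x\<in>UNIV. x ^ i)"
    using sum.reindex_bij_betw[of _ UNIV UNIV "\<lambda>x. x ^ i"] by blast
  moreover have "(\<Sum>x\<in>UNIV. (a * x) ^ i) = a ^ i * (\<Sum>x\<in>UNIV. x ^ i)"
    by (simp add: power_mult_distrib sum_distrib_left)
  ultimately have "(a ^ i - 1) * (\<Sum>x\<in>UNIV. x ^ i) = 0"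
    by (simp add: algebra_simps)
  thus ?thesis using a by simp
qed

lemma sum_UNIV_monomial_mult:
  fixes k :: "'a::{field,finite}"
  shows "(\<Sum>p\<in>UNIV. fst p ^ i * snd p ^ j * k) = k * (\<Sum>x\<in>UNIV. x ^ i) * (\<Sum>y\<in>UNIV. y ^ j)"
proof -
  have "(\<Sum>x\<in>UNIV. \<Sum>y\<in>UNIV. x ^ i * y ^ j * k) = (\<Sum>p\<in>UNIV. fst p ^ i * snd p ^ j * k)"
    unfolding sum.cartesian_product UNIV_Times_UNIV by (rule sum.cong) auto
  moreover have "(\<Sum>x\<in>UNIV. \<Sum>y\<in>UNIV. x ^ i * y ^ j * k) = k * (\<Sum>x\<in>UNIV. x ^ i) * (\<Sum>y\<in>UNIV. y ^ j)"
    by (simp add: sum_product sum_distrib_left algebra_simps)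
  ultimately show ?thesis by simp
qed

text \<open>Every polynomial function of degree at most d has this property (by sum_UNIV_power_eq_0
on its monomials), and it is the only consequence of the degree that the polynomial method below
needs.\<close>

definition low_moments_vanish :: "nat \<Rightarrow> ('a::{field,finite} \<times> 'a \<Rightarrow> 'a) \<Rightarrow> bool" where
  "low_moments_vanish d f \<longleftrightarrow>
     (\<forall>i j. i + j + d < 2 * (CARD('a) - 1) \<longrightarrow> (\<Sum>p\<in>UNIV. fst p ^ i * snd p ^ j * f p) = 0)"

lemma low_moments_vanish_const: "low_moments_vanish 0 (\<lambda>_. k)"
  unfolding low_moments_vanish_def
proof (intro allI impI)
  fix i j assume "i + j + 0 < 2 * (CARD('a) - 1)"
  hence "i < CARD('a) - 1 \<or> j < CARD('a) - 1" by linarith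
  thus "(\<Sum>p\<in>UNIV. fst p ^ i * snd p ^ j * k) = (0::'a)"
    by (auto simp: sum_UNIV_monomial_mult sum_UNIV_power_eq_0)
qed

lemma low_moments_vanish_mult_linear:
  assumes "low_moments_vanish d f"
  shows "low_moments_vanish (Suc d) (\<lambda>p. (\<alpha> * fst p + \<beta> * snd p + \<gamma>) * f p)"
  unfolding low_moments_vanish_def
proof (intro allI impI)
  fix i j assume ij: "i + j + Suc d < 2 * (CARD('a) - 1)"
  let ?m = "\<lambda>i j. \<Sum>p\<in>UNIV. fst p ^ i * snd p ^ j * f p"
  have m: "\<forall>i j. i + j + d < 2 * (CARD('a) - 1) \<longrightarrow> ?m i j = 0"
    using assms unfolding low_moments_vanish_def .
  have zero: "?m (Suc i) j = 0" "?m i (Suc j) = 0" "?m i j = 0"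
    using m[rule_format, of "Suc i" j] m[rule_format, of i "Suc j"] m[rule_format, of i j] ij
    by simp_all
  have "(\<Sum>p\<in>UNIV. fst p ^ i * snd p ^ j * ((\<alpha> * fst p + \<beta> * snd p + \<gamma>) * f p))
      = (\<Sum>p\<in>UNIV. \<alpha> * (fst p ^ Suc i * snd p ^ j * f p) + \<beta> * (fst p ^ i * snd p ^ Suc j * f p)
          + \<gamma> * (fst p ^ i * snd p ^ j * f p))"
    by (rule sum.cong) (simp_all add: algebra_simps)
  also have "\<dots> = \<alpha> * ?m (Suc i) j + \<beta> * ?m i (Suc j) + \<gamma> * ?m i j"
    by (simp only: sum.distrib sum_distrib_left)
  also have "\<dots> = 0" by (simp only: zero) simp
  finally show "(\<Sum>p\<in>UNIV. fst p ^ i * snd p ^ j * ((\<alpha> * fst p + \<beta> * snd p + \<gamma>) * f p)) = 0" .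
qed

lemma low_moments_vanish_prod_linear:
  fixes \<alpha> \<beta> \<gamma> :: "'b \<Rightarrow> 'a::{field,finite}"
  assumes "finite S"
  shows "low_moments_vanish (card S) (\<lambda>p. \<Prod>s\<in>S. \<alpha> s * fst p + \<beta> s * snd p + \<gamma> s)"
  using assms
proof (induction S rule: finite_induct)
  case empty
  thus ?case using low_moments_vanish_const[of 1] by simp
next
  case (insert s S)
  thus ?case using low_moments_vanish_mult_linear[OF insert.IH, of "\<alpha> s" "\<beta> s" "\<gamma> s"] by simp
qed

theorem card_blocking_set_ge:
  fixes B :: "('a::{field,finite} \<times> 'a) set"
  assumes blocking: "\<And>L. ag_line L \<Longrightarrow> B \<inter> L \<noteq> {}"
  shows "2 * CARD('a) - 1 \<le> card B"
proof -
  have "B \<noteq> {}" using blocking[of "affine_line None 0"] ag_line_iff by blast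
  then obtain x0 y0 where p0: "(x0, y0) \<in> B" by auto
  define B' where "B' = B - {(x0, y0)}"
  \<comment> \<open>for (a, b) \<noteq> 0 the line a x + b y = 1 + a x0 + b y0 misses (x0, y0), so it meets B'
      and P (a, b) = 0; hence P sums to \<plusminus>1 over the plane, which forces its degree up\<close>
  define P where "P p = (\<Prod>s\<in>B'. (fst s - x0) * fst p + (snd s - y0) * snd p + (-1))"
    for p :: "'a \<times> 'a"
  have zero: "P (a, b) = 0" if "(a, b) \<noteq> (0, 0)" for a b
  proof -
    have "ag_line {(x, y). a * x + b * y = 1 + a * x0 + b * y0}"
      unfolding ag_line_def using that by blast
    then obtain u v where uv: "(u, v) \<in> B" "a * u + b * v = 1 + a * x0 + b * y0"
      using blocking by blast
    hence "(u, v) \<in> B'" by (auto simp: B'_def)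
    moreover have "(u - x0) * a + (v - y0) * b + (-1) = 0" using uv(2) by (simp add: algebra_simps)
    ultimately show ?thesis unfolding P_def by (intro prod_zero bexI[of _ "(u, v)"]) simp_all
  qed
  have "(\<Sum>p\<in>UNIV. P p) = (\<Sum>p\<in>{(0, 0)}. P p)"
    by (rule sum.mono_neutral_right) (use zero in auto)
  also have "\<dots> = (-1) ^ card B'" by (simp add: P_def)
  finally have sum_P: "(\<Sum>p\<in>UNIV. P p) \<noteq> 0" by simp
  have P_moments: "low_moments_vanish (card B') P"
    unfolding P_def by (rule low_moments_vanish_prod_linear) simp
  have "\<not> card B' < 2 * (CARD('a) - 1)"
  proof
    assume "card B' < 2 * (CARD('a) - 1)"
    hence "(\<Sum>p\<in>UNIV. fst p ^ 0 * snd p ^ 0 * P p) = 0"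
      using P_moments[unfolded low_moments_vanish_def, rule_format, of 0 0] by simp
    with sum_P show False by simp
  qed
  moreover have "card B' = card B - 1" using p0 by (simp add: B'_def card_Diff_singleton)
  moreover have "card B > 0" using p0 by (auto simp: card_gt_0_iff)
  ultimately show ?thesis by linarith
qed

section \<open>Conics\<close>

lemma exists_irreducible_quadratic: "\<exists>c::'a::{field,finite}. \<forall>r. r^2 + r + c \<noteq> 0"
proof -
  have "\<not> inj (\<lambda>r::'a. r^2 + r)"
  proof
    assume "inj (\<lambda>r::'a. r^2 + r)"
    moreover have "(\<lambda>r::'a. r^2 + r) 0 = (\<lambda>r. r^2 + r) (-1)" by simp
    ultimately have "(0::'a) = -1" by (rule injD)
    thus False by simp
  qed
  hence "\<not> surj (\<lambda>r::'a. r^2 + r)" using finite_UNIV_surj_inj[of "\<lambda>r::'a. r^2 + r"] by auto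
  then obtain c0 :: 'a where c0: "c0 \<notin> range (\<lambda>r. r^2 + r)" by auto
  have "r^2 + r + (- c0) \<noteq> 0" for r
  proof
    assume "r^2 + r + (- c0) = 0"
    hence "c0 \<in> range (\<lambda>r. r^2 + r)" by (intro range_eqI[where x = r]) simp
    with c0 show False by contradiction
  qed
  thus ?thesis by blast
qed

lemma card_quadratic_roots_le_2:
  fixes A B C :: "'a::field"
  assumes "A \<noteq> 0"
  shows "card {x. A * x^2 + B * x + C = 0} \<le> 2"
proof -
  have "{x. A * x^2 + B * x + C = 0} = {x. poly [:C, B, A:] x = 0}"
    by (simp add: algebra_simps power2_eq_square)
  moreover have "card {x. poly [:C, B, A:] x = 0} \<le> degree [:C, B, A:]"
    using assms by (intro card_poly_roots_bound) simp
  ultimately show ?thesis using assms by simp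
qed

lemma square_inj_char_2:
  fixes x y :: "'a::field"
  assumes "(2::'a) = 0" and "x^2 = y^2"
  shows "x = y"
proof -
  have "(x - y)^2 = (x^2 - y^2) + 2 * (y^2 - x * y)" by (simp add: algebra_simps power2_eq_square)
  hence "(x - y)^2 = 0" using assms by simp
  thus ?thesis by simp
qed

text \<open>If 2 is not 0, negation pairs off the nonzero elements, so q is odd.\<close>

lemma two_eq_0_if_even_card:
  assumes "even CARD('a::{field,finite})"
  shows "(2::'a) = 0"
proof (rule ccontr)
  assume two: "(2::'a) \<noteq> 0"
  have neg: "x \<noteq> -x" if "x \<noteq> 0" for x :: 'a
  proof
    assume "x = -x"
    hence "2 * x = 0" by (metis mult_2 neg_eq_iff_add_eq_0)
    thus False using two that by simp
  qed
  define C where "C = {{x, -x} | x::'a. x \<noteq> 0}"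
  have "2 * card C = card (\<Union>C)"
  proof (rule card_partition)
    show "card c = 2" if "c \<in> C" for c
    proof -
      obtain x where "c = {x, -x}" "x \<noteq> 0" using \<open>c \<in> C\<close> unfolding C_def by blast
      thus ?thesis using neg[of x] by simp
    qed
    show "c1 \<inter> c2 = {}" if "c1 \<in> C" "c2 \<in> C" "c1 \<noteq> c2" for c1 c2
    proof -
      obtain x y where c: "c1 = {x, -x}" "c2 = {y, -y}"
        using \<open>c1 \<in> C\<close> \<open>c2 \<in> C\<close> unfolding C_def by blast
      show ?thesis
      proof (rule ccontr)
        assume "c1 \<inter> c2 \<noteq> {}"
        hence "y = x \<or> y = -x" unfolding c by auto
        hence "c2 = c1" unfolding c by (auto simp: insert_commute)
        with \<open>c1 \<noteq> c2\<close> show False by simp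
      qed
    qed
  qed (rule finite)+
  moreover have "\<Union>C = UNIV - {0}" unfolding C_def by auto
  ultimately have "2 * card C = CARD('a) - 1" by (simp add: card_Diff_singleton)
  thus False using assms card_UNIV_field_ge_2[where 'a='a] by presburger
qed

locale anisotropic_quadratic =
  fixes c :: "'a::{field,finite}"
  assumes no_root: "\<And>r. r^2 + r + c \<noteq> 0"
begin

definition Q :: "'a \<Rightarrow> 'a \<Rightarrow> 'a" where
  "Q x y = x^2 + x * y + c * y^2"

definition conic :: "('a \<times> 'a) set" where
  "conic = {p. Q (fst p) (snd p) = 1}"

lemma c_nonzero: "c \<noteq> 0"
  using no_root[of 0] by simp

lemma Q_eq_0_iff: "Q x y = 0 \<longleftrightarrow> x = 0 \<and> y = 0"
proof (cases "y = 0")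
  case False
  have "Q x y = y^2 * ((x / y)^2 + x / y + c)"
    using False by (simp add: Q_def field_simps power2_eq_square)
  thus ?thesis using False no_root[of "x / y"] by simp
qed (simp add: Q_def)

lemma Q_1_nonzero: "Q 1 m \<noteq> 0"
  by (simp add: Q_eq_0_iff)

text \<open>oval_point m is the second intersection of the conic with the line of slope m through
(1, 0), the line of slope -2 being the tangent there; the vertical line through (1, 0) meets the
conic again in (1, -1/c).\<close>

definition chord_param :: "'a \<Rightarrow> 'a" where
  "chord_param m = - (2 + m) / Q 1 m"

definition oval_point :: "'a \<Rightarrow> 'a \<times> 'a" where
  "oval_point m = (1 + chord_param m, chord_param m * m)"

definition oval :: "('a \<times> 'a) set" where
  "oval = insert (1, 0) (insert (1, - 1 / c) (oval_point ` {m. m \<noteq> -2}))"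

lemma chord_param_nonzero: "m \<noteq> -2 \<Longrightarrow> chord_param m \<noteq> 0"
  using Q_1_nonzero[of m] by (auto simp: chord_param_def add_eq_0_iff)

lemma oval_subset_conic: "oval \<subseteq> conic"
proof -
  have "Q (fst (oval_point m)) (snd (oval_point m)) = 1" for m
  proof -
    have t: "chord_param m * Q 1 m = - (2 + m)"
      unfolding chord_param_def using Q_1_nonzero[of m] by simp
    have "Q (fst (oval_point m)) (snd (oval_point m))
        = 1 + chord_param m * (2 + m) + chord_param m * (chord_param m * Q 1 m)"
      unfolding oval_point_def Q_def by (simp add: algebra_simps power2_eq_square)
    thus ?thesis unfolding t by (simp add: algebra_simps)
  qed
  moreover have "Q 1 (- 1 / c) = 1"
    using c_nonzero by (simp add: Q_def field_simps power2_eq_square)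
  ultimately show ?thesis by (auto simp: oval_def conic_def Q_def)
qed

lemma card_oval: "card oval = CARD('a) + 1"
proof -
  have "inj_on oval_point {m. m \<noteq> -2}"
  proof (rule inj_onI)
    fix m m' assume "m \<in> {m. m \<noteq> -2}" "oval_point m = oval_point m'"
    thus "m = m'" using chord_param_nonzero[of m] by (auto simp: oval_point_def)
  qed
  moreover have "card {m::'a. m \<noteq> -2} = CARD('a) - 1"
    using card_Diff_singleton[of "-2" "UNIV :: 'a set"] by (simp add: set_diff_eq)
  moreover have "(1, 0) \<notin> oval_point ` {m. m \<noteq> -2}" "(1, - 1 / c) \<notin> oval_point ` {m. m \<noteq> -2}"
    using chord_param_nonzero by (auto simp: oval_point_def)
  moreover have "(1, 0) \<noteq> (1, - 1 / c)" using c_nonzero by simp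
  ultimately show ?thesis
    using card_UNIV_field_ge_2[where 'a='a] by (simp add: oval_def card_image)
qed

lemma card_conic_Int_affine_line_le_2: "card (conic \<inter> affine_line d b) \<le> 2"
proof -
  obtain A B C and f :: "'a \<Rightarrow> 'a \<times> 'a"
    where "A \<noteq> 0" and sub: "conic \<inter> affine_line d b \<subseteq> f ` {x. A * x^2 + B * x + C = 0}"
  proof (cases d)
    case None
    have "conic \<inter> affine_line d b \<subseteq> (\<lambda>y. (b, y)) ` {y. c * y^2 + b * y + (b^2 - 1) = 0}"
    proof
      fix p assume "p \<in> conic \<inter> affine_line d b"
      hence "p = (b, snd p)" "Q b (snd p) = 1"
        by (auto simp: None conic_def affine_line_def line_coord_def prod_eq_iff)
      moreover have "Q b y - 1 = c * y^2 + b * y + (b^2 - 1)" for y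
        by (simp add: Q_def algebra_simps)
      ultimately show "p \<in> (\<lambda>y. (b, y)) ` {y. c * y^2 + b * y + (b^2 - 1) = 0}"
        by (metis (mono_tags, lifting) diff_self image_eqI mem_Collect_eq)
    qed
    with c_nonzero show thesis by (rule that)
  next
    case (Some m)
    have "conic \<inter> affine_line d b
        \<subseteq> (\<lambda>x. (x, m * x + b)) ` {x. Q 1 m * x^2 + (b + 2 * c * m * b) * x + (c * b^2 - 1) = 0}"
    proof
      fix p assume "p \<in> conic \<inter> affine_line d b"
      hence "p = (fst p, m * fst p + b)" "Q (fst p) (m * fst p + b) = 1"
        by (auto simp: Some conic_def affine_line_def line_coord_def prod_eq_iff algebra_simps)
      moreover have "Q x (m * x + b) - 1 = Q 1 m * x^2 + (b + 2 * c * m * b) * x + (c * b^2 - 1)" for x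
        by (simp add: Q_def algebra_simps power2_eq_square)
      ultimately show "p \<in> (\<lambda>x. (x, m * x + b)) `
          {x. Q 1 m * x^2 + (b + 2 * c * m * b) * x + (c * b^2 - 1) = 0}"
        by (metis (mono_tags, lifting) diff_self image_eqI mem_Collect_eq)
    qed
    with Q_1_nonzero show thesis by (rule that)
  qed
  have "card (conic \<inter> affine_line d b) \<le> card (f ` {x. A * x^2 + B * x + C = 0})"
    using sub by (rule card_mono[OF finite])
  also have "\<dots> \<le> card {x. A * x^2 + B * x + C = 0}"
    by (rule card_image_le[OF finite])
  also have "\<dots> \<le> 2"
    using \<open>A \<noteq> 0\<close> by (rule card_quadratic_roots_le_2)
  finally show ?thesis .
qed

lemma card_oval_Int_affine_line_le_2: "card (oval \<inter> affine_line d b) \<le> 2"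
proof -
  have "oval \<inter> affine_line d b \<subseteq> conic \<inter> affine_line d b" using oval_subset_conic by blast
  hence "card (oval \<inter> affine_line d b) \<le> card (conic \<inter> affine_line d b)"
    by (rule card_mono[OF finite])
  thus ?thesis using card_conic_Int_affine_line_le_2[of d b] by linarith
qed

definition hyperoval :: "('a \<times> 'a) set" where
  "hyperoval = insert (0, 0) oval"

lemma card_hyperoval: "card hyperoval = CARD('a) + 2"
proof -
  have "(0, 0) \<notin> oval" using oval_subset_conic by (auto simp: conic_def Q_def)
  thus ?thesis by (simp add: hyperoval_def card_oval)
qed

text \<open>In characteristic 2 the origin is the nucleus of the conic: Q is homogeneous of degree 2
and squaring is injective, so a line through the origin meets the conic at most once.\<close>

lemma card_conic_Int_affine_line_through_0_le_1:
  assumes char_2: "(2::'a) = 0"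
  shows "card (conic \<inter> affine_line d 0) \<le> 1"
proof -
  obtain v where v: "\<And>p. p \<in> affine_line d 0 \<Longrightarrow> \<exists>t. p = (t * fst v, t * snd v)"
  proof (cases d)
    case None
    show thesis
      by (rule that[of "(0, 1)"]) (auto simp: None affine_line_def line_coord_def prod_eq_iff)
  next
    case (Some m)
    show thesis
      by (rule that[of "(1, m)"]) (auto simp: Some affine_line_def line_coord_def prod_eq_iff)
  qed
  have "p = p'" if pp': "p \<in> conic \<inter> affine_line d 0" "p' \<in> conic \<inter> affine_line d 0" for p p'
  proof -
    obtain t t' where p: "p = (t * fst v, t * snd v)" and p': "p' = (t' * fst v, t' * snd v)"
      using v[OF IntD2[OF pp'(1)]] v[OF IntD2[OF pp'(2)]] by blast
    have "Q (s * fst v) (s * snd v) = s^2 * Q (fst v) (snd v)" for s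
      by (simp add: Q_def algebra_simps power2_eq_square)
    hence "t^2 * Q (fst v) (snd v) = t'^2 * Q (fst v) (snd v)" "Q (fst v) (snd v) \<noteq> 0"
      using pp' by (auto simp: p p' conic_def)
    hence "t = t'" using square_inj_char_2[OF char_2] by simp
    thus ?thesis by (simp add: p p')
  qed
  thus ?thesis by (simp add: card_le_Suc0_iff_eq)
qed

lemma card_hyperoval_Int_affine_line_le_2:
  assumes char_2: "(2::'a) = 0"
  shows "card (hyperoval \<inter> affine_line d b) \<le> 2"
proof (cases "(0, 0) \<in> affine_line d b")
  case False
  hence "hyperoval \<inter> affine_line d b = oval \<inter> affine_line d b" by (auto simp: hyperoval_def)
  thus ?thesis using card_oval_Int_affine_line_le_2 by simp
next
  case True
  hence "b = 0" by (cases d) (auto simp: affine_line_def line_coord_def)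
  have "hyperoval \<inter> affine_line d b \<subseteq> insert (0, 0) (conic \<inter> affine_line d 0)"
    using oval_subset_conic \<open>b = 0\<close> by (auto simp: hyperoval_def)
  hence "card (hyperoval \<inter> affine_line d b) \<le> card (insert (0, 0) (conic \<inter> affine_line d 0))"
    by (rule card_mono[OF finite])
  also have "\<dots> \<le> Suc (card (conic \<inter> affine_line d 0))"
    by (simp add: card_insert_if)
  also have "\<dots> \<le> 2"
    using card_conic_Int_affine_line_through_0_le_1[OF char_2, of d] by simp
  finally show ?thesis .
qed

end

section \<open>The values of ell\<close>

lemma ell_small:
  fixes t :: "'a::{field,finite} itself"
  assumes "1 \<le> u" "u \<le> n" "u \<le> CARD('a)"
  shows "ell t u n = u + CARD('a)"
proof -
  obtain S :: "'a set" where "card S = u"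
    using obtain_subset_with_card_n[of u "UNIV :: 'a set"] assms(3) by auto
  define F0 where "F0 = (\<lambda>y. (0::'a, y)) ` S"
  have card_F0: "card F0 = u" unfolding F0_def using \<open>card S = u\<close> by (simp add: card_image inj_on_def)
  have F0_line: "card (F0 \<inter> L) \<le> u" for L
    using card_mono[OF finite Int_lower1, of F0 L] card_F0 by simp
  have arc: "proj_arc u n F0"
    unfolding proj_arc_def using card_F0 F0_line assms(2) le_trans by blast
  show ?thesis
  proof (rule ell_eqI[OF _ arc])
    fix F :: "('a \<times> 'a) set" assume "proj_arc u n F"
    hence "card F = u" by (simp add: proj_arc_def)
    thus "\<exists>T. transversal T \<and> u + CARD('a) \<le> Fval F T"
      using exists_transversal_Fval_ge_card[of F] assms(1) by fastforce
  next
    fix T :: "('a \<times> 'a) set set" assume "transversal T"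
    have "card (F0 \<inter> affine_line d b) \<le> (if d = None then u else 1)" for d b
    proof (cases d)
      case (Some m)
      have "F0 \<inter> affine_line d b \<subseteq> {(0, b)}"
        unfolding F0_def by (auto simp: Some affine_line_def line_coord_def)
      hence "card (F0 \<inter> affine_line d b) \<le> card {(0::'a, b)}" by (rule card_mono[OF finite])
      thus ?thesis using Some by simp
    qed (simp add: F0_line)
    with \<open>transversal T\<close> show "Fval F0 T \<le> u + CARD('a)"
      by (metis Fval_le_sum sum_UNIV_option_if_eq mult_1_right)
  qed
qed

lemma ell1_multiple_of_card:
  fixes t :: "'a::{field,finite} itself"
  assumes "1 \<le> s" "s \<le> CARD('a)"
  shows "ell1 t (s * CARD('a)) = s * CARD('a) + CARD('a)"
  unfolding ell1_def
proof -
  obtain S :: "'a set" where "card S = s"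
    using obtain_subset_with_card_n[of s "UNIV :: 'a set"] assms(2) by auto
  define F0 where "F0 = S \<times> (UNIV :: 'a set)"
  have "card F0 = s * CARD('a)" unfolding F0_def using \<open>card S = s\<close> by (simp add: card_cartesian_product)
  show "ell t (s * CARD('a)) CARD('a) = s * CARD('a) + CARD('a)"
  proof (rule ell_eqI[OF _ proj_arc_card_UNIV[OF \<open>card F0 = s * CARD('a)\<close>]])
    fix F :: "('a \<times> 'a) set" assume "proj_arc (s * CARD('a)) CARD('a) F"
    moreover have "0 < s * CARD('a)" using assms(1) by simp
    ultimately show "\<exists>T. transversal T \<and> s * CARD('a) + CARD('a) \<le> Fval F T"
      using exists_transversal_Fval_ge_card[of F] by (fastforce simp: proj_arc_def)
  next
    fix T :: "('a \<times> 'a) set set" assume "transversal T"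
    have "card (F0 \<inter> affine_line d b) \<le> (if d = None then CARD('a) else s)" for d b
    proof (cases d)
      case (Some m)
      have "F0 \<inter> affine_line d b \<subseteq> (\<lambda>x. (x, m * x + b)) ` S"
        unfolding F0_def by (auto simp: Some affine_line_def line_coord_def algebra_simps)
      hence "card (F0 \<inter> affine_line d b) \<le> card ((\<lambda>x. (x, m * x + b)) ` S)"
        by (rule card_mono[OF finite])
      also have "\<dots> \<le> s" using card_image_le[OF finite] \<open>card S = s\<close> by metis
      finally show ?thesis using Some by simp
    qed (simp add: card_Int_affine_line_le)
    from Fval_le_sum[OF \<open>transversal T\<close> this]
    show "Fval F0 T \<le> s * CARD('a) + CARD('a)" by (simp add: sum_UNIV_option_if_eq mult.commute)
  qed
qed

lemma ell_card_plus_1: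
  fixes t :: "'a::{field,finite} itself"
  assumes "2 \<le> n"
  shows "ell t (CARD('a) + 1) n = 2 * (CARD('a) + 1)"
proof -
  obtain c :: 'a where "\<forall>r. r^2 + r + c \<noteq> 0" using exists_irreducible_quadratic by blast
  then interpret anisotropic_quadratic c by unfold_locales simp
  have "proj_arc (CARD('a) + 1) n oval"
    unfolding proj_arc_def ag_line_iff using card_oval card_oval_Int_affine_line_le_2 assms
    by (auto intro: le_trans)
  thus ?thesis
  proof (rule ell_eqI[rotated])
    fix F :: "('a \<times> 'a) set" assume "proj_arc (CARD('a) + 1) n F"
    hence "CARD('a) * 1 < card F" by (simp add: proj_arc_def)
    thus "\<exists>T. transversal T \<and> 2 * (CARD('a) + 1) \<le> Fval F T"
      using exists_transversal_Fval_ge_rich by (fastforce simp: mult.commute)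
  next
    fix T :: "('a \<times> 'a) set set" assume "transversal T"
    from Fval_le_sum[OF this card_oval_Int_affine_line_le_2]
    show "Fval oval T \<le> 2 * (CARD('a) + 1)" by (simp add: card_UNIV_option)
  qed
qed

lemma ell_card_plus_2:
  fixes t :: "'a::{field,finite} itself"
  assumes "2 \<le> n" "even CARD('a)"
  shows "ell t (CARD('a) + 2) n = 2 * (CARD('a) + 1)"
proof -
  obtain c :: 'a where "\<forall>r. r^2 + r + c \<noteq> 0" using exists_irreducible_quadratic by blast
  then interpret anisotropic_quadratic c by unfold_locales simp
  note hyperoval_line = card_hyperoval_Int_affine_line_le_2[OF two_eq_0_if_even_card[OF assms(2)]]
  have "proj_arc (CARD('a) + 2) n hyperoval"
    unfolding proj_arc_def ag_line_iff using card_hyperoval hyperoval_line assms(1)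
    by (auto intro: le_trans)
  thus ?thesis
  proof (rule ell_eqI[rotated])
    fix F :: "('a \<times> 'a) set" assume "proj_arc (CARD('a) + 2) n F"
    hence "CARD('a) * 1 < card F" by (simp add: proj_arc_def)
    thus "\<exists>T. transversal T \<and> 2 * (CARD('a) + 1) \<le> Fval F T"
      using exists_transversal_Fval_ge_rich by (fastforce simp: mult.commute)
  next
    fix T :: "('a \<times> 'a) set set" assume "transversal T"
    from Fval_le_sum[OF this hyperoval_line]
    show "Fval hyperoval T \<le> 2 * (CARD('a) + 1)" by (simp add: card_UNIV_option)
  qed
qed

lemma ell1_card_minus_1_squared:
  fixes t :: "'a::{field,finite} itself"
  shows "ell1 t (CARD('a)^2 - 2 * CARD('a) + 1) = CARD('a)^2 - 1"
  unfolding ell1_def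
proof -
  obtain r where q: "CARD('a) = r + 2" by (rule card_UNIV_fieldE)
  define F0 where "F0 = (- {0::'a}) \<times> (- {0::'a})"
  have "card F0 = (CARD('a) - 1) * (CARD('a) - 1)"
    by (simp add: F0_def card_cartesian_product Compl_eq_Diff_UNIV card_Diff_singleton)
  also have "\<dots> = CARD('a)^2 - 2 * CARD('a) + 1" by (simp add: q power2_eq_square algebra_simps)
  finally have arc: "proj_arc (CARD('a)^2 - 2 * CARD('a) + 1) CARD('a) F0"
    by (rule proj_arc_card_UNIV)
  show "ell t (CARD('a)^2 - 2 * CARD('a) + 1) CARD('a) = CARD('a)^2 - 1"
  proof (rule ell_eqI[OF _ arc])
    fix F :: "('a \<times> 'a) set" assume "proj_arc (CARD('a)^2 - 2 * CARD('a) + 1) CARD('a) F"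
    hence "CARD('a) * r < card F" by (simp add: proj_arc_def q power2_eq_square algebra_simps)
    from exists_transversal_Fval_ge_rich[OF this]
    show "\<exists>T. transversal T \<and> CARD('a)^2 - 1 \<le> Fval F T" by (simp add: q power2_eq_square algebra_simps)
  next
    fix T :: "('a \<times> 'a) set set" assume "transversal T"
    \<comment> \<open>every line meets one of the axes outside F0\<close>
    have "card (F0 \<inter> affine_line d b) \<le> CARD('a) - 1" for d b
    proof (cases d)
      case None
      show ?thesis
        by (rule card_Int_affine_line_le_diff_1[of "(b, 0)"])
          (simp_all add: None F0_def affine_line_def line_coord_def)
    next
      case (Some m)
      show ?thesis
        by (rule card_Int_affine_line_le_diff_1[of "(0, b)"])
          (simp_all add: Some F0_def affine_line_def line_coord_def)
    qed
    from Fval_le_sum[OF \<open>transversal T\<close> this]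
    show "Fval F0 T \<le> CARD('a)^2 - 1" by (simp add: card_UNIV_option q power2_eq_square algebra_simps)
  qed
qed

lemma card_Compl_points: "card (- F) = CARD('a::{field,finite})^2 - card (F :: ('a \<times> 'a) set)"
  using card_Diff_subset[of F UNIV] by (simp add: Compl_eq_Diff_UNIV power2_eq_square)

lemma ell1_eq_card_squared:
  fixes t :: "'a::{field,finite} itself"
  assumes u: "CARD('a)^2 - 2 * CARD('a) + 2 \<le> u" "u \<le> CARD('a)^2 - CARD('a)"
  shows "ell1 t u = CARD('a)^2"
  unfolding ell1_def
proof -
  obtain r where q: "CARD('a) = r + 2" by (rule card_UNIV_fieldE)
  define V where "V = (- {0::'a}) \<times> (UNIV :: 'a set)"
  have "card V = CARD('a)^2 - CARD('a)"
    by (simp add: V_def card_cartesian_product Compl_eq_Diff_UNIV card_Diff_singleton q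
        power2_eq_square algebra_simps)
  with u(2) obtain F0 where "F0 \<subseteq> V" "card F0 = u"
    by (metis obtain_subset_with_card_n)
  show "ell t u CARD('a) = CARD('a)^2"
  proof (rule ell_eqI[OF _ proj_arc_card_UNIV[OF \<open>card F0 = u\<close>]])
    fix F :: "('a \<times> 'a) set" assume "proj_arc u CARD('a) F"
    hence card_F: "card F = u" by (simp add: proj_arc_def)
    \<comment> \<open>the complement of F is too small to be a blocking set, so F contains a whole line\<close>
    have "card (- F) < 2 * CARD('a) - 1"
      using u card_F by (simp add: card_Compl_points q power2_eq_square algebra_simps)
    hence "\<exists>L. ag_line L \<and> - F \<inter> L = {}"
      using card_blocking_set_ge[of "- F"] by (meson not_le)
    then obtain d0 b0 where "affine_line d0 b0 \<subseteq> F" by (auto simp: ag_line_iff)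
    have "\<exists>b. (if d = d0 then CARD('a) else CARD('a) - 1) \<le> card (F \<inter> affine_line d b)" for d
    proof (cases "d = d0")
      case True
      have "card (F \<inter> affine_line d0 b0) = CARD('a)"
        using \<open>affine_line d0 b0 \<subseteq> F\<close> by (simp add: Int_absorb1 card_affine_line)
      thus ?thesis using True by (intro exI[of _ b0]) simp
    next
      case False
      have "CARD('a) * r < card F" using u card_F by (simp add: q power2_eq_square algebra_simps)
      thus ?thesis using False exists_affine_line_card_gt[of r F d] by (simp add: q Suc_le_eq)
    qed
    from exists_transversal_Fval_ge_sum[OF this]
    show "\<exists>T. transversal T \<and> CARD('a)^2 \<le> Fval F T"
      by (simp add: sum_UNIV_option_if_eq q power2_eq_square algebra_simps)
  next
    fix T :: "('a \<times> 'a) set set" assume "transversal T"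
    have "card (F0 \<inter> affine_line d b) \<le> (if d = None then CARD('a) else CARD('a) - 1)" for d b
    proof (cases d)
      case (Some m)
      have "(0, b) \<in> affine_line d b" "(0, b) \<notin> F0"
        using \<open>F0 \<subseteq> V\<close> by (auto simp: Some V_def affine_line_def line_coord_def)
      thus ?thesis using Some card_Int_affine_line_le_diff_1 by simp
    qed (simp add: card_Int_affine_line_le)
    from Fval_le_sum[OF \<open>transversal T\<close> this]
    show "Fval F0 T \<le> CARD('a)^2" by (simp add: sum_UNIV_option_if_eq q power2_eq_square algebra_simps)
  qed
qed

lemma ell1_eq_card_squared_plus_card:
  fixes t :: "'a::{field,finite} itself"
  assumes u: "CARD('a)^2 - CARD('a) + 1 \<le> u" "u \<le> CARD('a)^2"
  shows "ell1 t u = CARD('a)^2 + CARD('a)"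
  unfolding ell1_def
proof -
  obtain r where q: "CARD('a) = r + 2" by (rule card_UNIV_fieldE)
  have "u \<le> card (UNIV :: ('a \<times> 'a) set)" using u(2) by (simp add: power2_eq_square)
  then obtain F0 :: "('a \<times> 'a) set" where "card F0 = u" by (metis obtain_subset_with_card_n)
  show "ell t u CARD('a) = CARD('a)^2 + CARD('a)"
  proof (rule ell_eqI[OF _ proj_arc_card_UNIV[OF \<open>card F0 = u\<close>]])
    fix F :: "('a \<times> 'a) set" assume "proj_arc u CARD('a) F"
    hence "CARD('a) * (r + 1) < card F"
      using u by (simp add: proj_arc_def q power2_eq_square algebra_simps)
    from exists_transversal_Fval_ge_rich[OF this]
    show "\<exists>T. transversal T \<and> CARD('a)^2 + CARD('a) \<le> Fval F T"
      by (simp add: q power2_eq_square algebra_simps)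
  next
    fix T :: "('a \<times> 'a) set set" assume "transversal T"
    from Fval_le_sum[OF this card_Int_affine_line_le]
    show "Fval F0 T \<le> CARD('a)^2 + CARD('a)" by (simp add: card_UNIV_option power2_eq_square algebra_simps)
  qed
qed

theorem theorem4p4:
  fixes t :: "'a::{field,finite} itself"
  defines "q \<equiv> card (UNIV :: 'a set)"
  shows
   "(\<forall>u n. n \<ge> 1 \<and> 1 \<le> u \<and> u \<le> min n q \<and> (\<exists>F::('a\<times>'a) set. proj_arc u n F)
        \<longrightarrow> ell t u n = u + q)
    \<and> (\<forall>s. 1 \<le> s \<and> s \<le> q \<longrightarrow> ell1 t (s * q) = s * q + q)
    \<and> (\<forall>n. n \<ge> 2 \<and> (\<exists>F::('a\<times>'a) set. proj_arc (q + 1) n F)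
        \<longrightarrow> ell t (q + 1) n = 2 * (q + 1))
    \<and> (even q \<longrightarrow> (\<forall>n. n \<ge> 2 \<and> (\<exists>F::('a\<times>'a) set. proj_arc (q + 2) n F)
        \<longrightarrow> ell t (q + 2) n = 2 * (q + 1)))
    \<and> ell1 t (q^2 - 2*q + 1) = q^2 - 1
    \<and> (\<forall>u. q^2 - 2*q + 2 \<le> u \<and> u \<le> q^2 - q \<longrightarrow> ell1 t u = q^2)
    \<and> (\<forall>u. q^2 - q + 1 \<le> u \<and> u \<le> q^2 \<longrightarrow> ell1 t u = q^2 + q)"
  unfolding q_def
  using ell_small[where t = t] ell1_multiple_of_card[where t = t] ell_card_plus_1[where t = t]
    ell_card_plus_2[where t = t] ell1_card_minus_1_squared[where t = t]
    ell1_eq_card_squared[where t = t] ell1_eq_card_squared_plus_card[where t = t]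
  by auto

end
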